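(* Let $\mathcal{G}=(V,E_L,E_R)$ be an achievement positional game. If there exists a bijection $\sigma:V\to V$ such that $\sigma(e)\in E_L$ and $\sigma^{-1}(e)\in E_L$ for all $e\in E_R$, then Left has a non-losing strategy on $\mathcal{G}$ as first player.
   Context: A hypergraph is a pair $(V,E)$ with $V$ finite and $E\subseteq 2^V\setminus\{\varnothing\}$. An achievement positional game is a triple $\mathcal{G}=(V,E_L,E_R)$ where $(V,E_L)$ and $(V,E_R)$ are hypergraphs; elements of $E_L$ are blue edges, elements of $E_R$ are red edges. Two players, Left and Right, alternately pick a previously unpicked vertex of $V$ (either player may be designated to start). A player fills an edge when they have picked all its vertices. If Left fills a blue edge before Right fills a red edge, Left wins; if Right fills a red edge before Left fills a blue edge, Right wins; if neither happens before all vertices are picked, the game is a draw. A non-losing strategy guarantees a win or a draw. For $e\subseteq V$, $\sigma(e)=\{\sigma(x):x\in e\}$. *)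

theory Defs
  imports Main
begin

text \<open>Plays are lists of picked vertices, in order.  Left moves first, so Left
picks the entries at even positions (0,2,4,...) and Right those at odd positions.\<close>

definition left_picks :: "'a list \<Rightarrow> 'a set" where
  "left_picks xs = {xs ! i | i. i < length xs \<and> even i}"

definition right_picks :: "'a list \<Rightarrow> 'a set" where
  "right_picks xs = {xs ! i | i. i < length xs \<and> odd i}"

definition hypergraph :: "'a set \<Rightarrow> 'a set set \<Rightarrow> bool" where
  "hypergraph V E \<longleftrightarrow> finite V \<and> E \<subseteq> Pow V - {{}}"

definition right_wins_play :: "'a set set \<Rightarrow> 'a set set \<Rightarrow> 'a list \<Rightarrow> bool" where
  "right_wins_play EL ER xs \<longleftrightarrow>
     (\<exists>k \<le> length xs. (\<exists>e \<in> ER. e \<subseteq> right_picks (take k xs)) \<and>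
        (\<forall>j \<le> k. \<not> (\<exists>e \<in> EL. e \<subseteq> left_picks (take j xs))))"

definition consistent_left :: "('a list \<Rightarrow> 'a) \<Rightarrow> 'a list \<Rightarrow> bool" where
  "consistent_left s xs \<longleftrightarrow> (\<forall>i < length xs. even i \<longrightarrow> xs ! i = s (take i xs))"

definition nonlosing_left_first ::
  "'a set \<Rightarrow> 'a set set \<Rightarrow> 'a set set \<Rightarrow> ('a list \<Rightarrow> 'a) \<Rightarrow> bool" where
  "nonlosing_left_first V EL ER s \<longleftrightarrow>
     (\<forall>h. distinct h \<and> set h \<subseteq> V \<and> consistent_left s h \<and> even (length h)
          \<and> length h < card V \<longrightarrow> s h \<in> V - set h) \<and>
     (\<forall>xs. distinct xs \<and> set xs = V \<and> consistent_left s xs \<longrightarrow>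
          \<not> right_wins_play EL ER xs)"

end

theory Submission imports Defs begin

text \<open>Strategy stealing.  Call a position forced if Right can make sure to fill a red edge
before Left fills a blue one.  Two forced positions, one with Left and one with Right to
move, cannot mirror each other through \<sigma> (Left's picks in the first carried onto Right's
picks in the second, Right's picks in the first carried into Left's picks in the second):
in each of them the player to move can copy the opponent's moves of the other one through
\<sigma> or its inverse, and both maps send red edges to blue edges.  The empty position with
Left to move is mirrored in this sense by the position after any opening move of Left,
so it is not forced, and Left keeps the position unforced by always moving to an
unforced one.\<close>

inductive right_forces ::
  "'a set \<Rightarrow> 'a set set \<Rightarrow> 'a set set \<Rightarrow> 'a set \<Rightarrow> 'a set \<Rightarrow> bool \<Rightarrow> bool"
  for V EL ER where
  \<comment> \<open>the flag is True when Left is to move\<close>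
  red_filled: "\<not> (\<exists>f\<in>EL. f \<subseteq> L) \<Longrightarrow> \<exists>e\<in>ER. e \<subseteq> R \<Longrightarrow>
    right_forces V EL ER L R left_moves"
| left_move: "\<not> (\<exists>f\<in>EL. f \<subseteq> L) \<Longrightarrow> V - (L \<union> R) \<noteq> {} \<Longrightarrow>
    (\<forall>x\<in>V - (L \<union> R). right_forces V EL ER (insert x L) R False) \<Longrightarrow>
    right_forces V EL ER L R True"
| right_move: "\<not> (\<exists>f\<in>EL. f \<subseteq> L) \<Longrightarrow> x \<in> V - (L \<union> R) \<Longrightarrow>
    right_forces V EL ER L (insert x R) True \<Longrightarrow> right_forces V EL ER L R False"

lemma right_forces_no_blue: "right_forces V EL ER L R t \<Longrightarrow> \<not> (\<exists>f\<in>EL. f \<subseteq> L)"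
  by (induction rule: right_forces.induct) auto

lemma right_forces_insert_right:
  assumes "\<not> right_forces V EL ER L R False" and "x \<in> V - (L \<union> R)"
  shows "\<not> right_forces V EL ER L (insert x R) True"
  using assms right_move right_forces_no_blue by metis

lemma unforced_left_move_exists:
  assumes "\<not> right_forces V EL ER L R True" and "V - (L \<union> R) \<noteq> {}"
  shows "\<exists>x\<in>V - (L \<union> R). \<not> right_forces V EL ER (insert x L) R False"
proof (cases "\<exists>f\<in>EL. f \<subseteq> L")
  case True
  then have "\<not> right_forces V EL ER (insert x L) R False" for x
    using right_forces_no_blue[of V EL ER "insert x L" R False] by blast
  then show ?thesis using assms(2) by blast
next
  case False
  show ?thesis
  proof (rule ccontr)
    assume "\<not> ?thesis"
    then have "right_forces V EL ER L R True"
      using False assms(2) by (intro left_move) auto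
    then show False using assms(1) by contradiction
  qed
qed

lemma blue_from_red_image:
  assumes "bij_betw \<sigma> V V" and "\<forall>e\<in>ER. inv_into V \<sigma> ` e \<in> EL"
    and "L \<subseteq> V" and "e \<in> ER" and "e \<subseteq> \<sigma> ` L"
  shows "\<exists>f\<in>EL. f \<subseteq> L"
proof -
  have "inv_into V \<sigma> ` e \<subseteq> inv_into V \<sigma> ` \<sigma> ` L"
    using assms(5) by (rule image_mono)
  also have "\<dots> = L"
    using assms(1,3) by (simp add: bij_betw_def inv_into_image_cancel)
  finally show ?thesis using assms(2,4) by blast
qed

lemma mirrored_positions_not_both_forced:
  assumes bij: "bij_betw \<sigma> V V" and edges: "\<forall>e\<in>ER. \<sigma> ` e \<in> EL \<and> inv_into V \<sigma> ` e \<in> EL"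
  shows "right_forces V EL ER L1 R1 t \<Longrightarrow> right_forces V EL ER L2 R2 (\<not> t) \<Longrightarrow>
    L1 \<subseteq> V \<Longrightarrow> R1 \<subseteq> V \<Longrightarrow> \<sigma> ` L1 = R2 \<Longrightarrow> \<sigma> ` R1 \<subseteq> L2 \<Longrightarrow> False"
proof (induction L1 R1 t arbitrary: L2 R2 rule: right_forces.induct)
  case (red_filled L R t)
  obtain e where "e \<in> ER" "e \<subseteq> R"
    using red_filled.hyps(2) by blast
  then have "\<sigma> ` e \<in> EL" and "\<sigma> ` e \<subseteq> L2"
    using edges red_filled.prems(5) by blast+
  then show ?case
    using right_forces_no_blue[OF red_filled.prems(1)] by blast
next
  case (left_move L R)
  have pulled_back: "\<not> (\<exists>e\<in>ER. e \<subseteq> R2)"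
    using blue_from_red_image[OF bij _ left_move.prems(2)] edges left_move.hyps(1)
      left_move.prems(4) by blast
  from left_move.prems(1) show False
  proof (cases rule: right_forces.cases)
    case red_filled
    then show False using pulled_back by blast
  next
    case (right_move x)
    \<comment> \<open>Left answers with the preimage of Right's move\<close>
    define u where "u = inv_into V \<sigma> x"
    have "x \<in> V" using right_move by blast
    then have "u \<in> V" "\<sigma> u = x"
      using bij unfolding u_def bij_betw_def by (auto intro: inv_into_into f_inv_into_f)
    then have "u \<in> V - (L \<union> R)"
      using right_move left_move.prems(4,5) by blast
    have IH: "\<forall>L2' R2'. right_forces V EL ER L2' R2' True \<longrightarrow> insert u L \<subseteq> V \<longrightarrow>
        R \<subseteq> V \<longrightarrow> \<sigma> ` insert u L = R2' \<longrightarrow> \<sigma> ` R \<subseteq> L2' \<longrightarrow> False"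
      using bspec[OF left_move.IH \<open>u \<in> V - (L \<union> R)\<close>] unfolding not_False_eq_True
      by (rule conjunct2)
    show False
    proof (rule IH[rule_format])
      show "insert u L \<subseteq> V" using left_move.prems(2) \<open>u \<in> V\<close> by blast
      show "\<sigma> ` insert u L = insert x R2" using left_move.prems(4) \<open>\<sigma> u = x\<close> by simp
    qed (use right_move left_move.prems(3,5) in auto)
  qed simp
next
  case (right_move L x R)
  have pulled_back: "\<not> (\<exists>e\<in>ER. e \<subseteq> R2)"
    using blue_from_red_image[OF bij _ right_move.prems(2)] edges right_move.hyps(1)
      right_move.prems(4) by blast
  from right_move.prems(1) show False
  proof (cases rule: right_forces.cases)
    case red_filled
    then show False using pulled_back by blast
  next
    case left_move
    \<comment> \<open>the mirrored position must give \<sigma> x to Left; if it is already Left's, any move will do\<close>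
    have "x \<in> V" using right_move.hyps by blast
    then have "\<sigma> x \<in> V" using bij by (auto simp: bij_betw_def)
    have "\<sigma> x \<notin> R2"
      using right_move.hyps(2) right_move.prems(2,4) bij \<open>x \<in> V\<close>
      by (auto simp: bij_betw_def inj_on_def)
    obtain m where m: "m \<in> V - (L2 \<union> R2)" "\<sigma> x \<in> insert m L2"
      using local.left_move \<open>\<sigma> x \<in> V\<close> \<open>\<sigma> x \<notin> R2\<close> by blast
    have mirrored: "right_forces V EL ER (insert m L2) R2 False"
      using local.left_move m(1) by blast
    have "\<sigma> ` insert x R \<subseteq> insert m L2"
      using right_move.prems(5) m(2) by blast
    moreover have "insert x R \<subseteq> V"
      using right_move.prems(3) \<open>x \<in> V\<close> by blast
    ultimately show False
      using right_move.IH[of "insert m L2" R2, unfolded not_True_eq_False, OF mirrored]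
        right_move.prems(2,4)
      by blast
  qed simp
qed

lemma nth_set_snoc:
  "{(h @ [x]) ! i | i. i < length (h @ [x]) \<and> P i} =
    {h ! i | i. i < length h \<and> P i} \<union> (if P (length h) then {x} else {})"
proof -
  have "{i. i < length (h @ [x]) \<and> P i} =
      {i. i < length h \<and> P i} \<union> (if P (length h) then {length h} else {})"
    by (auto simp: less_Suc_eq)
  moreover have "(\<lambda>i. (h @ [x]) ! i) ` {i. i < length h \<and> P i} = (\<lambda>i. h ! i) ` {i. i < length h \<and> P i}"
    by (simp add: nth_append)
  ultimately show ?thesis
    unfolding setcompr_eq_image by (simp add: image_Un)
qed

lemma picks_snoc:
  "left_picks (h @ [x]) = (if even (length h) then insert x (left_picks h) else left_picks h)"
  "right_picks (h @ [x]) = (if odd (length h) then insert x (right_picks h) else right_picks h)"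
  unfolding left_picks_def right_picks_def nth_set_snoc by simp_all

lemma left_picks_Un_right_picks: "left_picks h \<union> right_picks h = set h"
  unfolding left_picks_def right_picks_def set_conv_nth by blast

lemma consistent_left_take: "consistent_left s xs \<Longrightarrow> consistent_left s (take k xs)"
  unfolding consistent_left_def by (simp add: take_take min_def)

lemma consistent_left_snoc:
  "consistent_left s (h @ [x]) \<longleftrightarrow> consistent_left s h \<and> (even (length h) \<longrightarrow> x = s h)"
  unfolding consistent_left_def by (simp add: All_less_Suc nth_append conj_commute)

definition unforced_move :: "'a set \<Rightarrow> 'a set set \<Rightarrow> 'a set set \<Rightarrow> 'a list \<Rightarrow> 'a" where
  "unforced_move V EL ER h = (SOME x. x \<in> V - set h \<and>
     \<not> right_forces V EL ER (insert x (left_picks h)) (right_picks h) False)"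

lemma unforced_move_spec:
  assumes "\<not> right_forces V EL ER (left_picks h) (right_picks h) True" and "V - set h \<noteq> {}"
  shows "unforced_move V EL ER h \<in> V - set h"
    and "\<not> right_forces V EL ER (insert (unforced_move V EL ER h) (left_picks h)) (right_picks h) False"
proof -
  have "\<exists>x. x \<in> V - set h \<and> \<not> right_forces V EL ER (insert x (left_picks h)) (right_picks h) False"
    using unforced_left_move_exists[OF assms(1)] assms(2)
    by (force simp: left_picks_Un_right_picks)
  then have "unforced_move V EL ER h \<in> V - set h \<and>
      \<not> right_forces V EL ER (insert (unforced_move V EL ER h) (left_picks h)) (right_picks h) False"
    unfolding unforced_move_def by (rule someI_ex)
  then show "unforced_move V EL ER h \<in> V - set h"
    and "\<not> right_forces V EL ER (insert (unforced_move V EL ER h) (left_picks h)) (right_picks h) False"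
    by blast+
qed

lemma unforced_move_play_unforced:
  assumes "\<not> right_forces V EL ER {} {} True"
  shows "distinct h \<Longrightarrow> set h \<subseteq> V \<Longrightarrow> consistent_left (unforced_move V EL ER) h \<Longrightarrow>
    \<not> right_forces V EL ER (left_picks h) (right_picks h) (even (length h))"
proof (induction h rule: rev_induct)
  case Nil
  then show ?case using assms by (simp add: left_picks_def right_picks_def)
next
  case (snoc x h)
  then have unforced: "\<not> right_forces V EL ER (left_picks h) (right_picks h) (even (length h))"
    and "x \<in> V - set h"
    by (simp_all add: consistent_left_snoc)
  show ?case
  proof (cases "even (length h)")
    case True
    then have "x = unforced_move V EL ER h" using snoc.prems(3) by (simp add: consistent_left_snoc)
    then show ?thesis
      using unforced_move_spec(2)[of V EL ER h] unforced True \<open>x \<in> V - set h\<close>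
      by (auto simp: picks_snoc)
  next
    case False
    then show ?thesis
      using right_forces_insert_right[of V EL ER "left_picks h" "right_picks h" x]
        unforced \<open>x \<in> V - set h\<close>
      by (simp add: picks_snoc left_picks_Un_right_picks)
  qed
qed

lemma unforced_move_nonlosing:
  assumes "\<not> right_forces V EL ER {} {} True"
  shows "nonlosing_left_first V EL ER (unforced_move V EL ER)"
  unfolding nonlosing_left_first_def
proof (intro conjI allI impI)
  fix h
  assume h: "distinct h \<and> set h \<subseteq> V \<and> consistent_left (unforced_move V EL ER) h \<and>
    even (length h) \<and> length h < card V"
  then have "\<not> right_forces V EL ER (left_picks h) (right_picks h) True"
    using unforced_move_play_unforced[OF assms, of h] by simp
  moreover have "V - set h \<noteq> {}"
  proof
    assume "V - set h = {}"
    then have "card V \<le> card (set h)" by (intro card_mono) auto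
    then show False using h by (simp add: distinct_card)
  qed
  ultimately show "unforced_move V EL ER h \<in> V - set h"
    by (rule unforced_move_spec(1))
next
  fix xs
  assume xs: "distinct xs \<and> set xs = V \<and> consistent_left (unforced_move V EL ER) xs"
  show "\<not> right_wins_play EL ER xs"
  proof
    assume "right_wins_play EL ER xs"
    then obtain k where red: "\<exists>e\<in>ER. e \<subseteq> right_picks (take k xs)"
      and no_blue: "\<forall>j\<le>k. \<not> (\<exists>f\<in>EL. f \<subseteq> left_picks (take j xs))"
      unfolding right_wins_play_def by blast
    from no_blue have "\<not> (\<exists>f\<in>EL. f \<subseteq> left_picks (take k xs))"
      by blast
    then have "right_forces V EL ER (left_picks (take k xs)) (right_picks (take k xs))
        (even (length (take k xs)))"
      using red by (rule red_filled)
    moreover have "distinct (take k xs)" "set (take k xs) \<subseteq> V"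
      "consistent_left (unforced_move V EL ER) (take k xs)"
      using xs consistent_left_take set_take_subset by fastforce+
    ultimately show False using unforced_move_play_unforced[OF assms] by blast
  qed
qed

lemma opening_unforced:
  assumes "bij_betw \<sigma> V V" and "\<forall>e\<in>ER. \<sigma> ` e \<in> EL \<and> inv_into V \<sigma> ` e \<in> EL"
    and "{} \<notin> ER"
  shows "\<not> right_forces V EL ER {} {} True"
proof
  assume opening_forced: "right_forces V EL ER {} {} True"
  then show False
  proof (cases rule: right_forces.cases)
    case red_filled
    then show False using assms(3) by (simp add: subset_empty)
  next
    case left_move
    then have "V \<noteq> {}" and "\<forall>x\<in>V. right_forces V EL ER {x} {} False"
      by simp_all
    then obtain x where "right_forces V EL ER {x} {} (\<not> True)"
      by auto
    from mirrored_positions_not_both_forced[OF assms(1,2) opening_forced this] show False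
      by simp
  qed simp
qed

theorem lemma5:
  fixes V :: "'a set" and EL ER :: "'a set set" and \<sigma> :: "'a \<Rightarrow> 'a"
  assumes "hypergraph V EL" and "hypergraph V ER"
    and "bij_betw \<sigma> V V"
    and "\<forall>e \<in> ER. \<sigma> ` e \<in> EL \<and> inv_into V \<sigma> ` e \<in> EL"
  shows "\<exists>s. nonlosing_left_first V EL ER s"
proof -
  have "{} \<notin> ER"
    using assms(2) by (auto simp: hypergraph_def)
  then have "\<not> right_forces V EL ER {} {} True"
    using assms(3,4) by (intro opening_unforced)
  then have "nonlosing_left_first V EL ER (unforced_move V EL ER)"
    by (rule unforced_move_nonlosing)
  then show ?thesis by blast
qed

end
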